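(* For every $n>2$ and every $c\geq1$, $$\rho_{n,(1,1,c)}=\frac{n-2}{n}\cdot\frac{1}{1-(2/n)^c}.$$
   Context: Let $X$ be a finite alphabet with $n\geq 2$ letters and $X^*$ the set of words over $X$; $|v|$ is the length of a word $v$. A code over $X$ is a finite sequence $C=(v_1,\ldots,v_m)$ of words over $X$ such that every $w\in X^*$ has at most one factorization into code-words: if $w=v_{i_1}\cdots v_{i_l}=v_{j_1}\cdots v_{j_{l'}}$ with $l,l'\geq1$, then $l=l'$ and $i_t=j_t$ for all $t$. (Codes are sequences, not sets.) A code $C=(v_1,\ldots,v_m)$ is a prefix code if for all $i,j$, $v_i$ is a prefix of $v_j$ if and only if $i=j$. For a finite sequence $L=(a_1,\ldots,a_m)$ of positive integers, $UD_n(L)$ is the set of all codes $(v_1,\ldots,v_m)$ over an $n$-letter alphabet with $|v_i|=a_i$ for all $i$, $PR_n(L)\subseteq UD_n(L)$ is the subset of prefix codes, and $\rho_{n,L}=|PR_n(L)|/|UD_n(L)|$. *)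

theory Defs
  imports Complex_Main "HOL-Library.Sublist"
begin

text \<open>Alphabet with n letters: {0..<n}. Words: lists over it. A code is a list of words
 (a sequence, not a set).\<close>

definition words :: "nat \<Rightarrow> nat list set" where
  "words n = {w. set w \<subseteq> {0..<n}}"

definition is_code :: "nat list list \<Rightarrow> bool" where
  "is_code C \<longleftrightarrow>
     (\<forall>is js. is \<noteq> [] \<longrightarrow> js \<noteq> [] \<longrightarrow> set is \<subseteq> {0..<length C} \<longrightarrow> set js \<subseteq> {0..<length C} \<longrightarrow>
        concat (map (\<lambda>i. C ! i) is) = concat (map (\<lambda>j. C ! j) js) \<longrightarrow> is = js)"

definition is_prefix_code :: "nat list list \<Rightarrow> bool" where
  "is_prefix_code C \<longleftrightarrow>
     (\<forall>i<length C. \<forall>j<length C. prefix (C ! i) (C ! j) \<longleftrightarrow> i = j)"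

definition UD :: "nat \<Rightarrow> nat list \<Rightarrow> nat list list set" where
  "UD n L = {C. length C = length L \<and> (\<forall>i<length L. C ! i \<in> words n \<and> length (C ! i) = L ! i)
               \<and> is_code C}"

definition PR :: "nat \<Rightarrow> nat list \<Rightarrow> nat list list set" where
  "PR n L = {C \<in> UD n L. is_prefix_code C}"

definition rho :: "nat \<Rightarrow> nat list \<Rightarrow> real" where
  "rho n L = real (card (PR n L)) / real (card (UD n L))"

end

theory Submission
  imports Defs
begin

text \<open>The triple \<open>([a], [b], w)\<close> is a code iff \<open>a \<noteq> b\<close> and \<open>w\<close> is not a word over
  \<open>{a, b}\<close>: in a concatenation of code words containing a letter outside \<open>{a, b}\<close>, the first
  such letter occurs no earlier than it does in \<open>w\<close>, so a factorization beginning with \<open>w\<close>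
  cannot agree with one beginning with a single letter. It is a prefix code iff moreover the first
  letter of \<open>w\<close> is neither \<open>a\<close> nor \<open>b\<close>. Counting the ordered pairs \<open>(a, b)\<close> and the
  admissible \<open>w\<close> gives \<open>n(n-1)(n^c - 2^c)\<close> codes and \<open>n(n-1)(n-2)n^(c-1)\<close> prefix codes.\<close>

lemma takeWhile_concat_length_ge:
  assumes "\<forall>u\<in>set us. (\<forall>y\<in>set u. P y) \<or> m \<le> length (takeWhile P u)"
    and "\<exists>y\<in>set (concat us). \<not> P y"
  shows "m \<le> length (takeWhile P (concat us))"
  using assms
proof (induction us)
  case Nil
  then show ?case by simp
next
  case (Cons u us)
  show ?case
  proof (cases "\<forall>y\<in>set u. P y")
    case True
    then have "\<exists>y\<in>set (concat us). \<not> P y" using Cons.prems(2) by auto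
    then have "m \<le> length (takeWhile P (concat us))" using Cons by simp
    then show ?thesis using True by simp
  next
    case False
    then show ?thesis using Cons.prems(1) by (auto simp: takeWhile_append)
  qed
qed

lemma word_append_neq_letter_Cons:
  assumes "l \<in> {a, b}" and "\<not> set w \<subseteq> {a, b}" and "set vs \<subseteq> {[a], [b], w}"
  shows "w @ r \<noteq> l # concat vs"
proof
  assume eq: "w @ r = l # concat vs"
  let ?P = "\<lambda>y. y \<in> {a, b}"
  obtain z where z: "z \<in> set w" "\<not> ?P z" using assms(2) by auto
  have "z \<in> set (concat vs)" using z assms(1) arg_cong[OF eq, of set] by auto
  then have "length (takeWhile ?P w) \<le> length (takeWhile ?P (concat vs))"
    using z assms(3) by (intro takeWhile_concat_length_ge) auto
  moreover have "takeWhile ?P w = l # takeWhile ?P (concat vs)"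
    using z eq assms(1) takeWhile_append1[of z w ?P r] by simp
  ultimately show False by simp
qed

lemma concat_letters_word_inj:
  assumes "a \<noteq> b" and "\<not> set w \<subseteq> {a, b}"
    and "set us \<subseteq> {[a], [b], w}" and "set vs \<subseteq> {[a], [b], w}"
    and "concat us = concat vs"
  shows "us = vs"
  using assms(3-5)
proof (induction us arbitrary: vs)
  case Nil
  then show ?case using assms(2) by (cases vs) auto
next
  case (Cons u us)
  obtain v vs' where vs: "vs = v # vs'"
    using Cons.prems assms(2) by (cases vs) auto
  have eq: "u @ concat us = v @ concat vs'" using Cons.prems(3) vs by simp
  show ?case
  proof (cases "u = v")
    case True
    then show ?thesis using Cons eq vs by simp
  next
    case False
    have us: "set us \<subseteq> {[a], [b], w}" and vs': "set vs' \<subseteq> {[a], [b], w}"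
      using Cons.prems(1,2) vs by auto
    consider l where "u = w" "v = [l]" "l \<in> {a, b}"
      | l where "v = w" "u = [l]" "l \<in> {a, b}"
      | "u \<in> {[a], [b]}" "v \<in> {[a], [b]}"
      using Cons.prems(1,2) vs False by auto
    then show ?thesis
    proof cases
      case 1
      then show ?thesis using word_append_neq_letter_Cons[OF _ assms(2) vs'] eq by simp
    next
      case 2
      then show ?thesis using word_append_neq_letter_Cons[OF _ assms(2) us] eq[symmetric] by simp
    next
      case 3
      then show ?thesis using False eq assms(1) by auto
    qed
  qed
qed

lemma is_code_letters_word:
  assumes "a \<noteq> b" and "\<not> set w \<subseteq> {a, b}"
  shows "is_code [[a], [b], w]"
  unfolding is_code_def
proof (intro allI impI)
  let ?C = "[[a], [b], w]"
  fix xs ys :: "nat list"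
  assume xs: "set xs \<subseteq> {0..<length ?C}" and ys: "set ys \<subseteq> {0..<length ?C}"
    and eq: "concat (map ((!) ?C) xs) = concat (map ((!) ?C) ys)"
  have nth: "?C ! i \<in> {[a], [b], w}" if "i < length ?C" for i
    using that by (auto simp: less_Suc_eq)
  have "set (map ((!) ?C) zs) \<subseteq> {[a], [b], w}" if "set zs \<subseteq> {0..<length ?C}" for zs
    using that nth by (force simp: image_subset_iff)
  then have "map ((!) ?C) xs = map ((!) ?C) ys"
    using concat_letters_word_inj[OF assms _ _ eq] xs ys by blast
  moreover have "inj_on ((!) ?C) {0..<length ?C}"
    using assms by (auto simp: inj_on_def less_Suc_eq numeral_3_eq_3)
  ultimately show "xs = ys"
    using xs ys by (auto intro: map_inj_on inj_on_subset)
qed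

lemma is_code_letters_word_imp:
  assumes "is_code [[a], [b], w]" and "w \<noteq> []"
  shows "a \<noteq> b \<and> \<not> set w \<subseteq> {a, b}"
proof (intro conjI notI)
  let ?C = "[[a], [b], w]"
  have decode: "xs = ys"
    if "xs \<noteq> []" "ys \<noteq> []" "set xs \<subseteq> {0..<length ?C}" "set ys \<subseteq> {0..<length ?C}"
      "concat (map ((!) ?C) xs) = concat (map ((!) ?C) ys)" for xs ys :: "nat list"
    using assms(1) that unfolding is_code_def by simp
  show False if "a = b"
    using decode[of "[0]" "[1]"] that by simp
  show False if w: "set w \<subseteq> {a, b}"
  proof -
    have spell: "concat (map ((!) ?C) (map (\<lambda>y. if y = a then 0 else 1) u)) = u"
      if "set u \<subseteq> {a, b}" for u
      using that by (induction u) auto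
    define ys where "ys = map (\<lambda>y. if y = a then 0 else 1 :: nat) w"
    have "[2] = ys"
    proof (rule decode)
      show "concat (map ((!) ?C) [2]) = concat (map ((!) ?C) ys)"
        using spell[OF w] unfolding ys_def by simp
    qed (use assms(2) in \<open>auto simp: ys_def\<close>)
    then show False by (auto simp: ys_def split: if_splits)
  qed
qed

lemma is_code_letters_word_iff:
  assumes "w \<noteq> []"
  shows "is_code [[a], [b], w] \<longleftrightarrow> a \<noteq> b \<and> \<not> set w \<subseteq> {a, b}"
  using assms is_code_letters_word_imp is_code_letters_word by blast

lemma is_prefix_code_letters_word_iff:
  "is_prefix_code [[a], [b], x # w] \<longleftrightarrow> a \<noteq> b \<and> x \<notin> {a, b}"
  unfolding is_prefix_code_def by (auto simp: All_less_Suc2)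

lemma UD_1_1_c:
  assumes "c \<ge> 1"
  shows "UD n [1, 1, c] = {[[a], [b], w] | a b w.
    a < n \<and> b < n \<and> a \<noteq> b \<and> set w \<subseteq> {0..<n} \<and> length w = c \<and> \<not> set w \<subseteq> {a, b}}"
proof -
  have "w \<noteq> []" if "length w = c" for w :: "nat list"
    using assms that by auto
  then show ?thesis
    unfolding UD_def
    by (auto simp: All_less_Suc2 words_def length_Suc_conv is_code_letters_word_iff)
qed

lemma PR_1_1_c:
  assumes "c \<ge> 1"
  shows "PR n [1, 1, c] = {[[a], [b], w] | a b w.
    a < n \<and> b < n \<and> a \<noteq> b \<and> set w \<subseteq> {0..<n} \<and> length w = c \<and> hd w \<notin> {a, b}}"
proof -
  have "\<exists>x w'. w = x # w'" if "length w = c" for w :: "nat list"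
    using assms that by (cases w) auto
  then show ?thesis
    unfolding PR_def UD_1_1_c[OF assms]
    by (fastforce simp: is_prefix_code_letters_word_iff)
qed

lemma card_distinct_pairs:
  assumes "finite A"
  shows "card {(a, b). a \<in> A \<and> b \<in> A \<and> a \<noteq> b} = card A * (card A - 1)"
proof -
  have "{(a, b). a \<in> A \<and> b \<in> A \<and> a \<noteq> b} = (SIGMA a:A. A - {a})"
    by auto
  then show ?thesis
    using assms by simp
qed

lemma card_lists_not_over_pair:
  assumes "finite A" and "a \<in> A" and "b \<in> A" and "a \<noteq> b"
  shows "card {w. set w \<subseteq> A \<and> length w = c \<and> \<not> set w \<subseteq> {a, b}} = card A ^ c - 2 ^ c"
proof -
  have "{w. set w \<subseteq> A \<and> length w = c \<and> \<not> set w \<subseteq> {a, b}}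
      = {w. set w \<subseteq> A \<and> length w = c} - {w. set w \<subseteq> {a, b} \<and> length w = c}"
    by auto
  moreover have "{w. set w \<subseteq> {a, b} \<and> length w = c} \<subseteq> {w. set w \<subseteq> A \<and> length w = c}"
    using assms by auto
  ultimately show ?thesis
    using assms
    by (simp add: card_Diff_subset card_lists_length_eq finite_lists_length_eq numeral_2_eq_2)
qed

lemma card_lists_hd_notin:
  assumes "finite A" and "B \<subseteq> A"
  shows "card {w. set w \<subseteq> A \<and> length w = Suc c \<and> hd w \<notin> B} = (card A - card B) * card A ^ c"
proof -
  have "{w. set w \<subseteq> A \<and> length w = Suc c \<and> hd w \<notin> B}
      = (\<lambda>(x, v). x # v) ` ((A - B) \<times> {v. set v \<subseteq> A \<and> length v = c})"
    by (fastforce simp: length_Suc_conv)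
  moreover have "inj_on (\<lambda>(x, v). x # v) X" for X :: "('a \<times> 'a list) set"
    by (auto simp: inj_on_def)
  ultimately show ?thesis
    using assms
    by (simp add: card_image card_cartesian_product card_Diff_subset card_lists_length_eq
        finite_subset)
qed

lemma card_letters_word_family:
  assumes "\<And>a b. a < n \<Longrightarrow> b < n \<Longrightarrow> a \<noteq> b \<Longrightarrow>
      card {w. set w \<subseteq> {0..<n} \<and> length w = c \<and> Q a b w} = k"
  shows "card {[[a], [b], w] | a b w.
      a < n \<and> b < n \<and> a \<noteq> b \<and> set w \<subseteq> {0..<n} \<and> length w = c \<and> Q a b w}
    = n * (n - 1) * k"
proof -
  let ?pairs = "{(a, b). a \<in> {0..<n} \<and> b \<in> {0..<n} \<and> a \<noteq> b}"
  let ?W = "\<lambda>(a, b). {w. set w \<subseteq> {0..<n} \<and> length w = c \<and> Q a b w}"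
  let ?code = "\<lambda>((a, b), w). [[a], [b], w] :: nat list list"
  have "card {[[a], [b], w] | a b w.
      a < n \<and> b < n \<and> a \<noteq> b \<and> set w \<subseteq> {0..<n} \<and> length w = c \<and> Q a b w}
    = card (?code ` Sigma ?pairs ?W)"
    by (rule arg_cong[where f = card]) force
  also have "\<dots> = card (Sigma ?pairs ?W)"
    by (rule card_image) (auto simp: inj_on_def)
  also have "\<dots> = (\<Sum>p\<in>?pairs. card (?W p))"
  proof (rule card_SigmaI)
    show "finite ?pairs"
      by (rule finite_subset[of _ "{0..<n} \<times> {0..<n}"]) auto
    show "\<forall>p\<in>?pairs. finite (?W p)"
      by (auto intro: finite_subset[OF _ finite_lists_length_eq[of "{0..<n}" c]])
  qed
  also have "\<dots> = (\<Sum>p\<in>?pairs. k)"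
    by (rule sum.cong) (auto intro: assms)
  also have "\<dots> = n * (n - 1) * k"
    using card_distinct_pairs[of "{0..<n}"] by simp
  finally show ?thesis .
qed

lemma prefix_code_ratio:
  fixes n c :: nat
  assumes "n > 2"
  shows "real ((n - 2) * n ^ c) / real (n ^ Suc c - 2 ^ Suc c)
    = (real n - 2) / real n * (1 / (1 - (2 / real n) ^ Suc c))"
proof -
  have "(2::nat) ^ Suc c \<le> n ^ Suc c"
    using assms by (intro power_mono) auto
  then have "real (n ^ Suc c - 2 ^ Suc c) = real n ^ Suc c - 2 ^ Suc c"
    by (simp add: of_nat_diff)
  moreover have "(2::real) ^ Suc c < real n ^ Suc c"
    using assms by (intro power_strict_mono) auto
  moreover have "1 - (2 / real n) ^ Suc c = (real n ^ Suc c - 2 ^ Suc c) / real n ^ Suc c"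
    using assms by (simp add: power_divide field_simps)
  ultimately show ?thesis
    using assms by (simp add: of_nat_diff field_simps)
qed

theorem mainTheorem8:
  fixes n c :: nat
  assumes "n > 2" and "c \<ge> 1"
  shows "rho n [1, 1, c] = (real n - 2) / real n * (1 / (1 - (2 / real n) ^ c))"
proof -
  obtain c' where c: "c = Suc c'"
    using assms(2) by (cases c) auto
  have UD: "card (UD n [1, 1, c]) = n * (n - 1) * (n ^ c - 2 ^ c)"
    unfolding UD_1_1_c[OF assms(2)]
    by (rule card_letters_word_family) (simp add: card_lists_not_over_pair)
  have PR: "card (PR n [1, 1, c]) = n * (n - 1) * ((n - 2) * n ^ c')"
    unfolding PR_1_1_c[OF assms(2)]
  proof (rule card_letters_word_family)
    fix a b assume "a < n" "b < n" "a \<noteq> b"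
    then show "card {w. set w \<subseteq> {0..<n} \<and> length w = c \<and> hd w \<notin> {a, b}} = (n - 2) * n ^ c'"
      using card_lists_hd_notin[of "{0..<n}" "{a, b}" c'] c by simp
  qed
  have "rho n [1, 1, c]
      = real (n * (n - 1)) * real ((n - 2) * n ^ c') / (real (n * (n - 1)) * real (n ^ c - 2 ^ c))"
    unfolding rho_def UD PR of_nat_mult[of "n * (n - 1)"] ..
  also have "\<dots> = real ((n - 2) * n ^ c') / real (n ^ c - 2 ^ c)"
    using assms(1) by (intro mult_divide_mult_cancel_left) simp
  also have "\<dots> = (real n - 2) / real n * (1 / (1 - (2 / real n) ^ c))"
    unfolding c by (rule prefix_code_ratio[OF assms(1)])
  finally show ?thesis .
qed

end
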